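(* Let $K,L,T,r$ be positive integers with $L\le K$ and $1\le r\le \min\{K,T\}$, and let $(\alpha,\beta)$ be the $\mathsf{GASP}_r$ exponent vectors (defined in the context). Then the number of distinct integers in the sumset $\operatorname{Set}(\alpha)+\operatorname{Set}(\beta)$ is \begin{multline*} N= KL+2K+3T-2 -\max\{K,\varphi\}+(L-2)\max\{0,\min\{r,r-\varphi\}\}+ \lfloor (T-1)/r \rfloor \min\{T-1,K-r\} \\ -\mathbf{1}_{\varphi < r}\Bigg(\min\{0,\mu-r\} +r(T-1-\mu)/K+\frac{-Kx^2 + (-K-2\max\{0,\varphi\}+2T-2)x+T-1-\mu}{2} -\frac{T-1-\mu}{K} \cdot \frac{T-1+\mu}{2}\Bigg), \end{multline*} where $\varphi = T-1-KL+2K$, $\mu$ is the integer with $0 \le \mu \le K-1$ and $\mu \equiv T-1 \pmod{K}$, and $x = \min\left\{ \frac{T-1-\mu}{K} -\mathbf{1}_{\mu=0}, L-3 \right\}$.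
   Context: For positive integers $K,L,T,r$ with $L\le K$ and $1\le r\le\min\{K,T\}$, the code $\mathsf{GASP}_r$ is given by the integer vectors $\alpha=(\alpha_{\mathrm p}\mid\alpha_{\mathrm s})$ and $\beta=(\beta_{\mathrm p}\mid\beta_{\mathrm s})$ (concatenations), where $\alpha_{\mathrm p}=(0,1,\ldots,K-1)$; $\alpha_{\mathrm s}$ is the vector of the $T$ smallest elements of the set $\{KL+j+Kt : 0\le j\le r-1,\ t\in\mathbb{Z}_{\ge 0}\}$ listed in increasing order, i.e. $(KL,KL+1,\ldots,KL+r-1,KL+K,\ldots,KL+K+r-1,\ldots)$ of length $T$; $\beta_{\mathrm p}=(0,K,2K,\ldots,K(L-1))$; $\beta_{\mathrm s}=(KL,KL+1,\ldots,KL+T-1)$. $\operatorname{Set}(v)$ denotes the set of entries of a vector $v$, and $A+B=\{a+b: a\in A,b\in B\}$. $\mathbf{1}_P$ is $1$ if $P$ holds and $0$ otherwise. *)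

theory Defs
  imports Main "HOL.Rat"
begin

definition sumset :: "nat set \<Rightarrow> nat set \<Rightarrow> nat set" where
  "sumset A B = {a + b | a b. a \<in> A \<and> b \<in> B}"

definition gasp_S :: "nat \<Rightarrow> nat \<Rightarrow> nat \<Rightarrow> nat set" where
  "gasp_S K L r = {K * L + j + K * t | j t. j < r}"

text \<open>Set(alpha_s): the T smallest elements of gasp_S.\<close>
definition gasp_alpha_s :: "nat \<Rightarrow> nat \<Rightarrow> nat \<Rightarrow> nat \<Rightarrow> nat set" where
  "gasp_alpha_s K L T r =
     {a \<in> gasp_S K L r. card {b \<in> gasp_S K L r. b < a} < T}"

definition gasp_alpha :: "nat \<Rightarrow> nat \<Rightarrow> nat \<Rightarrow> nat \<Rightarrow> nat set" where
  "gasp_alpha K L T r = {0..<K} \<union> gasp_alpha_s K L T r"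

definition gasp_beta :: "nat \<Rightarrow> nat \<Rightarrow> nat \<Rightarrow> nat set" where
  "gasp_beta K L T = {K * i | i. i < L} \<union> {K * L ..< K * L + T}"

definition ind :: "bool \<Rightarrow> rat" where
  "ind P = (if P then 1 else 0)"

definition gasp_N :: "nat \<Rightarrow> nat \<Rightarrow> nat \<Rightarrow> nat \<Rightarrow> rat" where
  "gasp_N K' L' T' r' =
    (let K = int K'; L = int L'; T = int T'; r = int r';
         \<phi> = T - 1 - K * L + 2 * K;
         \<mu> = (T - 1) mod K;
         x = min ((T - 1 - \<mu>) div K - (if \<mu> = 0 then 1 else 0)) (L - 3)
     in of_int (K * L + 2 * K + 3 * T - 2 - max K \<phi>
                 + (L - 2) * max 0 (min r (r - \<phi>))
                 + ((T - 1) div r) * min (T - 1) (K - r))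
        - ind (\<phi> < r) *
          ( of_int (min 0 (\<mu> - r))
          + of_int (r * (T - 1 - \<mu>)) / of_int K
          + of_int (- K * x^2 + (- K - 2 * max 0 \<phi> + 2 * T - 2) * x + T - 1 - \<mu>) / 2
          - of_int (T - 1 - \<mu>) / of_int K * (of_int (T - 1 + \<mu>) / 2)))"

end

theory Submission
  imports Defs
begin

text \<open>
  Write \<open>n = K L\<close> and let \<open>e i = K (i div r) + i mod r\<close> enumerate \<open>{j + K t | j < r}\<close>
  increasingly, so that \<open>Set(\<alpha>\<^sub>s) = n + e[0, T)\<close>. The sumset then splits into three parts:
  the interval \<open>[0, n + K + T - 1)\<close> coming from \<open>[0, K)\<close>; the blocks \<open>n + {c + K m | c < r, m < L}\<close>,
  which lie below \<open>2 n\<close>; and \<open>2 n + {e j + t | j, t < T}\<close>, which also absorbs the sums of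
  \<open>\<alpha>\<^sub>s\<close> with multiples of \<open>K\<close> that overflow past block \<open>L\<close>.
  The last set is counted incrementally: passing from \<open>e j\<close> to \<open>e (j + 1)\<close> adds one new
  element inside a block and \<open>min T (K - r + 1)\<close> at a jump to the next block.
  The resulting closed form agrees with the paper's formula by a case distinction on \<open>L\<close>
  against \<open>(T - 1) div K + 2\<close>.
\<close>

definition block_enum :: "nat \<Rightarrow> nat \<Rightarrow> nat \<Rightarrow> nat" where
  "block_enum K r i = K * (i div r) + i mod r"

lemma block_enum_mult_add:
  assumes "j < r" shows "block_enum K r (t * r + j) = j + K * t"
  using assms by (simp add: block_enum_def)

lemma block_enum_strict_mono:
  assumes "0 < r" "r \<le> K"
  shows "strict_mono (block_enum K r)"
proof (rule strict_monoI)
  fix i j :: nat assume "i < j"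
  show "block_enum K r i < block_enum K r j"
  proof (cases "i div r = j div r")
    case True
    with \<open>i < j\<close> have "i mod r < j mod r"
      by (metis div_mult_mod_eq add_less_cancel_left)
    with True show ?thesis using assms(2) by (simp add: block_enum_def)
  next
    case False
    with \<open>i < j\<close> have "Suc (i div r) \<le> j div r"
      by (metis div_le_mono le_neq_implies_less less_imp_le Suc_leI)
    then have "K * Suc (i div r) \<le> K * (j div r)" by (rule mult_le_mono2)
    moreover have "i mod r < K" using assms by (meson mod_less_divisor order_less_le_trans)
    ultimately show ?thesis by (simp add: block_enum_def)
  qed
qed

lemma block_enum_Suc:
  assumes "0 < r" "r \<le> K"
  shows "block_enum K r (Suc i) =
    block_enum K r i + (if Suc (i mod r) = r then K - r + 1 else 1)"
proof (cases "Suc (i mod r) = r")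
  case True
  then have "Suc i div r = Suc (i div r)" "Suc i mod r = 0"
    using assms by (simp_all add: div_Suc mod_Suc)
  with True show ?thesis using assms(2) by (simp add: block_enum_def)
next
  case False
  then have "Suc i div r = i div r" "Suc i mod r = Suc (i mod r)"
    using assms by (simp_all add: div_Suc mod_Suc)
  with False show ?thesis by (simp add: block_enum_def)
qed

lemma gasp_S_eq_range:
  assumes "0 < r"
  shows "gasp_S K L r = range (\<lambda>i. K * L + block_enum K r i)"
proof (intro equalityI subsetI)
  fix x assume "x \<in> gasp_S K L r"
  then obtain j t where "x = K * L + j + K * t" "j < r" unfolding gasp_S_def by auto
  then have "x = K * L + block_enum K r (t * r + j)" by (simp add: block_enum_mult_add)
  then show "x \<in> range (\<lambda>i. K * L + block_enum K r i)" by blast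
next
  fix x assume "x \<in> range (\<lambda>i. K * L + block_enum K r i)"
  then obtain i where "x = K * L + block_enum K r i" by blast
  then have "x = K * L + i mod r + K * (i div r)" by (simp add: block_enum_def)
  moreover have "i mod r < r" using assms by simp
  ultimately show "x \<in> gasp_S K L r" unfolding gasp_S_def by blast
qed

lemma strict_mono_lowest_elements:
  fixes h :: "nat \<Rightarrow> 'a::linorder"
  assumes "strict_mono h"
  shows "{a \<in> range h. card {b \<in> range h. b < a} < T} = h ` {..<T}"
proof -
  have "card {b \<in> range h. b < h i} = i" for i
  proof -
    have "{b \<in> range h. b < h i} = h ` {..<i}"
      using assms by (auto simp: strict_mono_less)
    then show ?thesis
      using strict_mono_imp_inj_on[OF assms] by (simp add: card_image inj_on_subset)
  qed
  then show ?thesis by auto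
qed

lemma gasp_alpha_eq:
  assumes "0 < r" "r \<le> K"
  shows "gasp_alpha K L T r = {0..<K} \<union> (\<lambda>j. K * L + block_enum K r j) ` {..<T}"
proof -
  have "strict_mono (\<lambda>j. K * L + block_enum K r j)"
    by (rule strict_monoI) (simp add: strict_monoD[OF block_enum_strict_mono[OF assms]])
  then show ?thesis unfolding gasp_alpha_def gasp_alpha_s_def gasp_S_eq_range[OF assms(1)]
    by (simp add: strict_mono_lowest_elements)
qed

lemma gasp_beta_eq: "gasp_beta K L T = (*) K ` {..<L} \<union> {K * L..<K * L + T}"
  unfolding gasp_beta_def by auto

definition gasp_blocks :: "nat \<Rightarrow> nat \<Rightarrow> nat \<Rightarrow> nat set" where
  "gasp_blocks K r L = {c + K * m | c m. c < r \<and> m < L}"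

definition enum_sums :: "nat \<Rightarrow> nat \<Rightarrow> nat \<Rightarrow> nat \<Rightarrow> nat set" where
  "enum_sums K r T k = {block_enum K r j + t | j t. j < k \<and> t < T}"

lemma sumset_Un_left: "sumset (A \<union> B) C = sumset A C \<union> sumset B C"
  unfolding sumset_def by blast

lemma sumset_Un_right: "sumset A (B \<union> C) = sumset A B \<union> sumset A C"
  unfolding sumset_def by blast

lemma sumset_memI: "a \<in> A \<Longrightarrow> b \<in> B \<Longrightarrow> a + b \<in> sumset A B"
  unfolding sumset_def by blast

lemma sumset_lessThan_multiples: "sumset {0..<K} ((*) K ` {..<L}) = {0..<K * L}"
proof (intro equalityI subsetI)
  fix x assume "x \<in> sumset {0..<K} ((*) K ` {..<L})"
  then obtain a i where "x = a + K * i" "a < K" "i < L" unfolding sumset_def by auto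
  moreover have "K * Suc i \<le> K * L" using \<open>i < L\<close> by (intro mult_le_mono2) simp
  ultimately show "x \<in> {0..<K * L}" by simp
next
  fix x assume "x \<in> {0..<K * L}"
  then have "0 < K" by (cases K) auto
  with \<open>x \<in> {0..<K * L}\<close> have "x div K < L" "x mod K < K"
    by (simp_all add: div_less_iff_less_mult mult.commute)
  then have "x mod K + K * (x div K) \<in> sumset {0..<K} ((*) K ` {..<L})"
    by (intro sumset_memI) auto
  then show "x \<in> sumset {0..<K} ((*) K ` {..<L})" by simp
qed

lemma sumset_lessThan_atLeastLessThan:
  assumes "0 < K" "0 < T"
  shows "sumset {0..<K} {a..<a + T} = {a..<a + K + T - 1}"
proof (intro equalityI subsetI)
  fix x assume "x \<in> sumset {0..<K} {a..<a + T}"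
  then show "x \<in> {a..<a + K + T - 1}" unfolding sumset_def by auto
next
  fix x assume x: "x \<in> {a..<a + K + T - 1}"
  show "x \<in> sumset {0..<K} {a..<a + T}"
  proof (cases "x < a + T")
    case True
    then show ?thesis using assms x unfolding sumset_def by force
  next
    case False
    then have "x = (x - (a + T - 1)) + (a + T - 1)" using assms by simp
    also have "\<dots> \<in> sumset {0..<K} {a..<a + T}"
      using False assms x by (intro sumset_memI) auto
    finally show ?thesis .
  qed
qed

lemma gasp_blocks_subset_sumset:
  assumes "r \<le> T"
  shows "(+) (K * L) ` gasp_blocks K r L
    \<subseteq> sumset ((\<lambda>j. K * L + block_enum K r j) ` {..<T}) ((*) K ` {..<L})"
proof
  fix x assume "x \<in> (+) (K * L) ` gasp_blocks K r L"
  then obtain c m where cm: "x = K * L + (c + K * m)" "c < r" "m < L"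
    unfolding gasp_blocks_def by auto
  then have "block_enum K r c = c" using block_enum_mult_add[of c r K 0] by simp
  then have "x = (K * L + block_enum K r c) + K * m" using cm by simp
  moreover have "c < T" using cm assms by simp
  ultimately show "x \<in> sumset ((\<lambda>j. K * L + block_enum K r j) ` {..<T}) ((*) K ` {..<L})"
    using cm unfolding sumset_def by blast
qed

lemma sumset_subset_gasp_blocks_enum_sums:
  assumes "0 < r"
  shows "sumset ((\<lambda>j. K * L + block_enum K r j) ` {..<T}) ((*) K ` {..<L})
    \<subseteq> (+) (K * L) ` gasp_blocks K r L \<union> (+) (2 * (K * L)) ` enum_sums K r T T"
proof
  fix x assume "x \<in> sumset ((\<lambda>j. K * L + block_enum K r j) ` {..<T}) ((*) K ` {..<L})"
  then obtain j i where ji: "x = K * L + block_enum K r j + K * i" "j < T" "i < L"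
    unfolding sumset_def by auto
  then have x: "x = K * L + (j mod r + K * (j div r + i))"
    by (simp add: block_enum_def algebra_simps)
  show "x \<in> (+) (K * L) ` gasp_blocks K r L \<union> (+) (2 * (K * L)) ` enum_sums K r T T"
  proof (cases "j div r + i < L")
    case True
    moreover have "j mod r < r" using assms by simp
    ultimately have "j mod r + K * (j div r + i) \<in> gasp_blocks K r L"
      unfolding gasp_blocks_def by blast
    then show ?thesis using x by blast
  next
    case False
    \<comment> \<open>The sum overflows past block \<open>L\<close>; it is then \<open>2 K L\<close> plus an earlier enumerated element.\<close>
    define t where "t = j div r + i - L"
    define j' where "j' = t * r + j mod r"
    have "t \<le> j div r" using ji(3) by (simp add: t_def)
    then have "j' \<le> j" unfolding j'_def
      using mult_le_mono1[of t "j div r" r] div_mult_mod_eq[of j r] by linarith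
    then have "block_enum K r j' + 0 \<in> enum_sums K r T T"
      using ji(2) unfolding enum_sums_def by fastforce
    moreover have "x = 2 * (K * L) + (block_enum K r j' + 0)"
    proof -
      have "K * (j div r + i) = K * L + K * t"
        using False by (simp add: t_def flip: distrib_left)
      moreover have "block_enum K r j' = j mod r + K * t"
        using assms by (simp add: j'_def block_enum_mult_add)
      ultimately show ?thesis using x by simp
    qed
    ultimately show ?thesis by blast
  qed
qed

lemma sumset_enum_interval:
  "sumset ((\<lambda>j. n + block_enum K r j) ` {..<T}) {n..<n + T} = (+) (2 * n) ` enum_sums K r T T"
proof (intro equalityI subsetI)
  fix x assume "x \<in> sumset ((\<lambda>j. n + block_enum K r j) ` {..<T}) {n..<n + T}"
  then obtain j b where x: "x = n + block_enum K r j + b" "j < T" "n \<le> b" "b < n + T"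
    unfolding sumset_def by auto
  moreover have "b - n < T" using \<open>n \<le> b\<close> \<open>b < n + T\<close> by simp
  with \<open>j < T\<close> have "block_enum K r j + (b - n) \<in> enum_sums K r T T"
    unfolding enum_sums_def by blast
  moreover have "x = 2 * n + (block_enum K r j + (b - n))" using \<open>n \<le> b\<close> x by simp
  ultimately show "x \<in> (+) (2 * n) ` enum_sums K r T T" by blast
next
  fix x assume "x \<in> (+) (2 * n) ` enum_sums K r T T"
  then obtain j t where "x = (n + block_enum K r j) + (n + t)" "j < T" "t < T"
    unfolding enum_sums_def by auto
  then show "x \<in> sumset ((\<lambda>j. n + block_enum K r j) ` {..<T}) {n..<n + T}"
    unfolding sumset_def by fastforce
qed

lemma gasp_sumset_eq:
  assumes "0 < K" "0 < T" "0 < r" "r \<le> K" "r \<le> T"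
  shows "sumset (gasp_alpha K L T r) (gasp_beta K L T) =
    {0..<K * L + K + T - 1} \<union> (+) (K * L) ` gasp_blocks K r L \<union> (+) (2 * (K * L)) ` enum_sums K r T T"
proof -
  let ?P = "sumset ((\<lambda>j. K * L + block_enum K r j) ` {..<T}) ((*) K ` {..<L})"
  have "sumset (gasp_alpha K L T r) (gasp_beta K L T) =
    ({0..<K * L} \<union> {K * L..<K * L + K + T - 1}) \<union> ?P \<union> (+) (2 * (K * L)) ` enum_sums K r T T"
    unfolding gasp_alpha_eq[OF assms(3,4)] gasp_beta_eq sumset_Un_left sumset_Un_right
      sumset_lessThan_multiples sumset_lessThan_atLeastLessThan[OF assms(1,2)] sumset_enum_interval
    by blast
  also have "{0..<K * L} \<union> {K * L..<K * L + K + T - 1} = {0..<K * L + K + T - 1}"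
    using assms by auto
  finally show ?thesis
    using gasp_blocks_subset_sumset[OF assms(5), of K L] sumset_subset_gasp_blocks_enum_sums[OF assms(3), of K L T]
    by blast
qed

lemma finite_enum_sums: "finite (enum_sums K r T k)"
  unfolding enum_sums_def by (rule finite_image_set2) auto

lemma enum_sums_Suc:
  "enum_sums K r T (Suc k) = enum_sums K r T k \<union> {block_enum K r k..<block_enum K r k + T}"
  unfolding enum_sums_def by (auto simp: less_Suc_eq) (metis add_less_cancel_left le_add_diff_inverse)

lemma enum_sums_subset:
  assumes "0 < r" "r \<le> K"
  shows "enum_sums K r T (Suc k) \<subseteq> {..<block_enum K r k + T}"
proof
  fix x assume "x \<in> enum_sums K r T (Suc k)"
  then obtain j t where "x = block_enum K r j + t" "j \<le> k" "t < T"
    unfolding enum_sums_def by auto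
  moreover have "block_enum K r j \<le> block_enum K r k"
    using block_enum_strict_mono[OF assms] \<open>j \<le> k\<close> by (simp add: strict_mono_less_eq)
  ultimately show "x \<in> {..<block_enum K r k + T}" by simp
qed

lemma card_enum_sums:
  assumes "0 < r" "r \<le> K" "0 < T"
  shows "card (enum_sums K r T (Suc m)) = T + m + m div r * min (T - 1) (K - r)"
proof (induction m)
  case 0
  have "enum_sums K r T (Suc 0) = {0..<T}"
    by (auto simp: enum_sums_Suc enum_sums_def block_enum_def)
  then show ?case by simp
next
  case (Suc m)
  let ?a = "block_enum K r m" and ?b = "block_enum K r (Suc m)"
  have "?a < ?b" using block_enum_strict_mono[OF assms(1,2)] by (simp add: strict_mono_def)
  moreover have "enum_sums K r T (Suc m) \<subseteq> {..<?a + T}"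
    using enum_sums_subset[OF assms(1,2)] .
  moreover have "{?a..<?a + T} \<subseteq> enum_sums K r T (Suc m)" by (simp add: enum_sums_Suc)
  ultimately have split: "enum_sums K r T (Suc (Suc m)) = enum_sums K r T (Suc m) \<union> {max ?b (?a + T)..<?b + T}"
    and disjoint: "enum_sums K r T (Suc m) \<inter> {max ?b (?a + T)..<?b + T} = {}"
    by (auto simp: enum_sums_Suc[of _ _ _ "Suc m"])
  have "card (enum_sums K r T (Suc (Suc m))) = card (enum_sums K r T (Suc m)) + min T (?b - ?a)"
    unfolding split by (subst card_Un_disjoint) (auto simp: finite_enum_sums disjoint)
  also have "min T (?b - ?a) = 1 + (if Suc (m mod r) = r then min (T - 1) (K - r) else 0)"
    using block_enum_Suc[OF assms(1,2), of m] assms by auto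
  moreover have "Suc m div r = m div r + (if Suc (m mod r) = r then 1 else 0)"
    using assms by (simp add: div_Suc mod_Suc)
  ultimately show ?case using Suc.IH by (simp add: algebra_simps)
qed

lemma finite_gasp_blocks: "finite (gasp_blocks K r L)"
  unfolding gasp_blocks_def by (rule finite_image_set2) auto

lemma gasp_blocks_Suc: "gasp_blocks K r (Suc L) = gasp_blocks K r L \<union> (\<lambda>c. c + K * L) ` {..<r}"
  unfolding gasp_blocks_def by (auto simp: less_Suc_eq)

lemma gasp_blocks_less:
  assumes "r \<le> K"
  shows "gasp_blocks K r L \<subseteq> {..<K * L}"
proof
  fix x assume "x \<in> gasp_blocks K r L"
  then obtain c m where x: "x = c + K * m" "c < r" "m < L" unfolding gasp_blocks_def by auto
  have "K * Suc m \<le> K * L" using x by (intro mult_le_mono2) simp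
  then show "x \<in> {..<K * L}" using x assms by simp
qed

lemma card_gasp_blocks_ge:
  assumes "r \<le> K" "b < K"
  shows "card {x \<in> gasp_blocks K r L. K * a + b \<le> x} =
    r * (L - Suc a) + (if a < L then r - min r b else 0)"
proof (induction L)
  case 0
  then show ?case by (simp add: gasp_blocks_def)
next
  case (Suc L)
  let ?P = "\<lambda>x. K * a + b \<le> x"
  let ?new = "{c. c < r \<and> ?P (c + K * L)}"
  have split: "{x \<in> gasp_blocks K r (Suc L). ?P x} = {x \<in> gasp_blocks K r L. ?P x} \<union> (\<lambda>c. c + K * L) ` ?new"
    unfolding gasp_blocks_Suc by auto
  have disjoint: "{x \<in> gasp_blocks K r L. ?P x} \<inter> (\<lambda>c. c + K * L) ` ?new = {}"
    using gasp_blocks_less[OF assms(1), of L] by auto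
  have "card ?new = (if a < L then r else if a = L then r - min r b else 0)"
  proof -
    consider "a < L" | "a = L" | "L < a" by linarith
    then show ?thesis
    proof cases
      case 1
      then have "K * Suc a \<le> K * L" by (intro mult_le_mono2) simp
      then have "?new = {..<r}" using assms by auto
      then show ?thesis using 1 by simp
    next
      case 2
      then have "?new = {b..<r}" by auto
      then show ?thesis using 2 by simp
    next
      case 3
      then have "K * Suc L \<le> K * a" by (intro mult_le_mono2) simp
      then have "?new = {}" using assms by auto
      then show ?thesis using 3 by simp
    qed
  qed
  moreover have "card {x \<in> gasp_blocks K r (Suc L). ?P x} = card {x \<in> gasp_blocks K r L. ?P x} + card ?new"
    unfolding split using finite_gasp_blocks disjoint
    by (subst card_Un_disjoint) (auto simp: card_image inj_on_def)
  moreover have "a < L \<Longrightarrow> r * (L - a) = r * (L - Suc a) + r"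
    by (metis Suc_diff_Suc mult_Suc_right add.commute)
  ultimately show ?case unfolding Suc.IH
    by (cases "a < L"; cases "a = L") (auto simp: Suc_diff_le mult_Suc_right)
qed

lemma card_gasp_sumset:
  assumes "0 < K" "0 < L" "0 < T" "0 < r" "r \<le> K" "r \<le> T"
  shows "card (sumset (gasp_alpha K L T r) (gasp_beta K L T)) + (K * L + K + T - 1 - 2 * (K * L))
    = (K * L + K + T - 1) + card {x \<in> gasp_blocks K r L. K + T - 1 \<le> x} + card (enum_sums K r T T)"
proof -
  define n where "n = K * L"
  define I where "I = {0..<n + K + T - 1}"
  define X where "X = (+) n ` gasp_blocks K r L"
  define Y where "Y = (+) (2 * n) ` enum_sums K r T T"
  have "finite I" "finite X" and "finite Y"
    unfolding I_def X_def Y_def by (simp_all add: finite_gasp_blocks finite_enum_sums)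
  have "X \<inter> Y = {}"
    using gasp_blocks_less[OF assms(5), of L] unfolding X_def Y_def n_def by force
  have "sumset (gasp_alpha K L T r) (gasp_beta K L T) = (I \<union> (X - I)) \<union> (Y - I)"
    using gasp_sumset_eq[OF assms(1,3-6)] unfolding I_def X_def Y_def n_def by blast
  also have "card \<dots> = card (I \<union> (X - I)) + card (Y - I)"
    using \<open>X \<inter> Y = {}\<close> \<open>finite I\<close> \<open>finite X\<close> \<open>finite Y\<close> by (intro card_Un_disjoint) auto
  also have "card (I \<union> (X - I)) = card I + card (X - I)"
    using \<open>finite I\<close> \<open>finite X\<close> by (intro card_Un_disjoint) auto
  finally have
    "card (sumset (gasp_alpha K L T r) (gasp_beta K L T)) = card I + card (X - I) + card (Y - I)" .
  moreover have "card (X - I) = card {x \<in> gasp_blocks K r L. K + T - 1 \<le> x}"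
  proof -
    have "X - I = (+) n ` {x \<in> gasp_blocks K r L. K + T - 1 \<le> x}"
      unfolding X_def I_def using assms by auto
    then show ?thesis by (simp add: card_image)
  qed
  moreover have "card (enum_sums K r T T) = card (Y \<inter> I) + card (Y - I)"
    using card_Int_Diff[OF \<open>finite Y\<close>] unfolding Y_def by (simp add: card_image)
  moreover have "Y \<inter> I = {2 * n..<n + K + T - 1}"
  proof
    show "Y \<inter> I \<subseteq> {2 * n..<n + K + T - 1}" unfolding Y_def I_def by auto
    show "{2 * n..<n + K + T - 1} \<subseteq> Y \<inter> I"
    proof
      fix y assume y: "y \<in> {2 * n..<n + K + T - 1}"
      have "K \<le> n" using assms y unfolding n_def by auto
      then have "y - 2 * n < T" using y by auto
      then have "block_enum K r 0 + (y - 2 * n) \<in> enum_sums K r T T"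
        using assms unfolding enum_sums_def by blast
      then show "y \<in> Y \<inter> I" using y unfolding Y_def I_def by (force simp: block_enum_def)
    qed
  qed
  ultimately show ?thesis unfolding I_def n_def by simp
qed

lemma card_gasp_sumset_div_mod:
  assumes "0 < K" "0 < L" "0 < T" "0 < r" "r \<le> K" "r \<le> T"
  defines "Q \<equiv> (T - 1) div K" and "\<mu> \<equiv> (T - 1) mod K"
  shows "card (sumset (gasp_alpha K L T r) (gasp_beta K L T)) + (K * L + K + T - 1 - 2 * (K * L))
    = (K * L + K + T - 1) + (r * (L - Suc (Suc Q)) + (if Suc Q < L then r - min r \<mu> else 0))
      + (T + (T - 1) + (T - 1) div r * min (T - 1) (K - r))"
proof -
  have "\<mu> < K" "K + T - 1 = K * Suc Q + \<mu>"
    using assms by (simp_all add: Q_def \<mu>_def)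
  then have "card {x \<in> gasp_blocks K r L. K + T - 1 \<le> x} =
      r * (L - Suc (Suc Q)) + (if Suc Q < L then r - min r \<mu> else 0)"
    using card_gasp_blocks_ge[OF assms(5) \<open>\<mu> < K\<close>, of L "Suc Q"] by simp
  moreover have "card (enum_sums K r T T) = T + (T - 1) + (T - 1) div r * min (T - 1) (K - r)"
    using card_enum_sums[OF assms(4,5,3), of "T - 1"] assms(3) by simp
  ultimately show ?thesis using card_gasp_sumset[OF assms(1-6)] by simp
qed

lemma int_diff_eq_max: "int (a - b) = max 0 (int a - int b)"
  by (simp add: max_def of_nat_diff)

text \<open>The terms count the interval \<open>[0, K L + K + T - 1)\<close>, the block
  elements above it (\<open>r (L - Q - 2) + (r - \<mu>)\<close>) and the \<open>2 T - 1 + \<dots>\<close> elements of \<open>enum_sums\<close>,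
  minus the part of \<open>2 K L + enum_sums\<close> inside the interval.\<close>
definition gasp_count :: "nat \<Rightarrow> nat \<Rightarrow> nat \<Rightarrow> nat \<Rightarrow> int" where
  "gasp_count K' L' T' r' =
    (let K = int K'; L = int L'; T = int T'; r = int r';
         Q = (T - 1) div K; \<mu> = (T - 1) mod K
     in K * L + K + 3 * T - 2 + ((T - 1) div r) * min (T - 1) (K - r)
        - max 0 (T + K - 1 - K * L)
        + r * max 0 (L - Q - 2) + (if Q + 1 < L then max 0 (r - \<mu>) else 0))"

lemma card_gasp_sumset_eq_gasp_count:
  assumes "0 < K" "0 < L" "0 < T" "0 < r" "r \<le> K" "r \<le> T"
  shows "int (card (sumset (gasp_alpha K L T r) (gasp_beta K L T))) = gasp_count K L T r"
proof -
  define Q where "Q = (T - 1) div K"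
  define \<mu> where "\<mu> = (T - 1) mod K"
  have "int (K * L + K + T - 1 - 2 * (K * L)) = max 0 (int T + int K - 1 - int K * int L)"
    using assms(3) by (simp add: int_diff_eq_max of_nat_diff)
  moreover have "int (K * L + K + T - 1) = int K * int L + int K + int T - 1"
    using assms(3) by (simp add: of_nat_diff)
  moreover have "int (r * (L - Suc (Suc Q))) = int r * max 0 (int L - int Q - 2)"
    by (simp add: max_def of_nat_diff)
  moreover have "int (if Suc Q < L then r - min r \<mu> else 0) =
      (if int Q + 1 < int L then max 0 (int r - int \<mu>) else 0)"
    by (simp add: max_def min_def of_nat_diff)
  moreover have "int (T + (T - 1) + (T - 1) div r * min (T - 1) (K - r)) =
      2 * int T - 1 + (int T - 1) div int r * min (int T - 1) (int K - int r)"
  proof -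
    have "min (int T - 1) (int K - int r) = int (min (T - 1) (K - r))"
      using assms by (simp add: of_nat_diff flip: of_nat_min)
    then show ?thesis using assms(3) by (simp add: of_nat_diff zdiv_int)
  qed
  ultimately have count: "int (card (sumset (gasp_alpha K L T r) (gasp_beta K L T)))
      + max 0 (int T + int K - 1 - int K * int L)
    = int K * int L + int K + int T - 1 + int r * max 0 (int L - int Q - 2)
      + (if int Q + 1 < int L then max 0 (int r - int \<mu>) else 0)
      + (2 * int T - 1 + (int T - 1) div int r * min (int T - 1) (int K - int r))"
    using arg_cong[OF card_gasp_sumset_div_mod[OF assms], of int]
    unfolding Q_def \<mu>_def by (simp only: of_nat_add add.assoc)
  have Q: "(int T - 1) div int K = int Q" and \<mu>: "(int T - 1) mod int K = int \<mu>"
    using assms(3) unfolding Q_def \<mu>_def by (simp_all add: of_nat_diff zdiv_int zmod_int)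
  show ?thesis unfolding gasp_count_def Let_def Q \<mu> using count by linarith
qed

lemma gasp_correction_eq:
  fixes T K L r Q \<mu> :: int
  assumes T: "T - 1 = K * Q + \<mu>" and "0 \<le> Q" "0 \<le> \<mu>" "\<mu> < K" "0 < r" "r \<le> K"
  defines "\<phi> \<equiv> T - 1 - K * L + 2 * K"
    and "x \<equiv> min ((T - 1 - \<mu>) div K - (if \<mu> = 0 then 1 else 0)) (L - 3)"
  shows "of_int ((L - 2) * max 0 (min r (r - \<phi>)))
      - ind (\<phi> < r) *
        (of_int (min 0 (\<mu> - r))
        + of_int (r * (T - 1 - \<mu>)) / of_int K
        + of_int (- K * x\<^sup>2 + (- K - 2 * max 0 \<phi> + 2 * T - 2) * x + T - 1 - \<mu>) / 2
        - of_int (T - 1 - \<mu>) / of_int K * (of_int (T - 1 + \<mu>) / 2))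
    = (of_int (r * max 0 (L - Q - 2) + (if Q + 1 < L then max 0 (r - \<mu>) else 0)) :: rat)"
proof -
  have "K > 0" using assms by simp
  then have Q: "(T - 1 - \<mu>) div K = Q"
    and rQ: "of_int (r * (T - 1 - \<mu>)) / of_int K = (of_int (r * Q) :: rat)"
    and Q': "of_int (T - 1 - \<mu>) / of_int K = (of_int Q :: rat)"
    using T by (simp_all add: field_simps)
  have \<phi>: "\<phi> = K * (Q + 2 - L) + \<mu>" unfolding \<phi>_def using T by (simp add: algebra_simps)
  consider "L \<le> Q + 1" | "L = Q + 2" | "Q + 3 \<le> L" by linarith
  then show ?thesis
  proof cases
    case 1
    then have "K * 1 \<le> K * (Q + 2 - L)" using \<open>K > 0\<close> by (intro mult_left_mono) auto
    then have "K \<le> \<phi>" using \<phi> \<open>0 \<le> \<mu>\<close> by simp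
    then show ?thesis using 1 assms by (simp add: ind_def)
  next
    case 2
    then have "\<phi> = \<mu>" "x = Q - 1" using \<phi> unfolding x_def Q by auto
    then show ?thesis using 2 T assms(2-)
      by (simp add: ind_def Q Q' rQ field_simps power2_eq_square)
  next
    case 3
    then have "K * (Q + 2 - L) \<le> K * (-1)" using \<open>K > 0\<close> by (intro mult_left_mono) auto
    then have "\<phi> < 0" using \<phi> \<open>\<mu> < K\<close> by simp
    moreover have "x = Q - (if \<mu> = 0 then 1 else 0)" using 3 unfolding x_def Q by auto
    moreover have "min 0 (\<mu> - r) = - max 0 (r - \<mu>)" by simp
    ultimately show ?thesis using 3 T assms(2-)
      by (cases "\<mu> = 0") (simp_all add: ind_def rQ Q' field_simps power2_eq_square)
  qed
qed

lemma gasp_N_closed_form: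
  fixes T K L r Q \<mu> :: int
  assumes "T - 1 = K * Q + \<mu>" and "0 \<le> Q" "0 \<le> \<mu>" "\<mu> < K" "0 < r" "r \<le> K"
  defines "\<phi> \<equiv> T - 1 - K * L + 2 * K"
    and "x \<equiv> min ((T - 1 - \<mu>) div K - (if \<mu> = 0 then 1 else 0)) (L - 3)"
  shows "of_int (K * L + 2 * K + 3 * T - 2 - max K \<phi>
                 + (L - 2) * max 0 (min r (r - \<phi>))
                 + ((T - 1) div r) * min (T - 1) (K - r))
      - ind (\<phi> < r) *
        (of_int (min 0 (\<mu> - r))
        + of_int (r * (T - 1 - \<mu>)) / of_int K
        + of_int (- K * x\<^sup>2 + (- K - 2 * max 0 \<phi> + 2 * T - 2) * x + T - 1 - \<mu>) / 2
        - of_int (T - 1 - \<mu>) / of_int K * (of_int (T - 1 + \<mu>) / 2))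
    = (of_int (K * L + K + 3 * T - 2 + ((T - 1) div r) * min (T - 1) (K - r)
               - max 0 (T + K - 1 - K * L)
               + r * max 0 (L - Q - 2) + (if Q + 1 < L then max 0 (r - \<mu>) else 0)) :: rat)"
proof -
  have "max K \<phi> = K + max 0 (T + K - 1 - K * L)" unfolding \<phi>_def by simp
  then show ?thesis using gasp_correction_eq[OF assms(1-6)] unfolding \<phi>_def x_def
    by simp
qed

lemma gasp_N_eq_gasp_count:
  assumes "0 < K" "0 < T" "0 < r" "r \<le> K"
  shows "gasp_N K L T r = of_int (gasp_count K L T r)"
  unfolding gasp_N_def gasp_count_def Let_def
  by (rule gasp_N_closed_form) (use assms in \<open>simp_all add: pos_imp_zdiv_nonneg_iff\<close>)

theorem theorem1:
  fixes K L T r :: nat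
  assumes "0 < K" "0 < L" "0 < T" "0 < r"
    and "L \<le> K" and "r \<le> min K T"
  shows "rat_of_nat (card (sumset (gasp_alpha K L T r) (gasp_beta K L T))) = gasp_N K L T r"
proof -
  have "r \<le> K" "r \<le> T" using assms(6) by simp_all
  then show ?thesis
    using card_gasp_sumset_eq_gasp_count[OF assms(1-4)] gasp_N_eq_gasp_count[OF assms(1,3,4)]
    by (metis of_int_of_nat_eq)
qed

end
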